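(* For every formula $\phi$: $\vdash\phi$ if and only if $\phi$ is valid (true at every state of every LIiP-model).
   Context: Syntax and proof system. Fix a finite set $\mathcal{A}$ of agent names containing a distinguished name $\mathsf{CM}$ (the communication medium). Messages are the terms generated by $M ::= a \mid B \mid (M,M)$, where $a\in\mathcal{A}$, $B$ ranges over an optional (possibly empty) set of further application-specific data constants, and $(M,M')$ is a pair. Let $\mathcal{P}$ be a denumerable set of propositional variables containing, for every $a\in\mathcal{A}$ and every message $M$, a distinguished atom $\mathsf{k}_a(M)$ ("$a$ knows $M$"). Formulas: $\phi ::= P \mid \phi\wedge\phi \mid \phi\vee\phi \mid \neg\phi \mid \phi\to\phi \mid [M]\phi$ ($P\in\mathcal{P}$, $M$ a message; $[M]\phi$ reads "$M$ can intuitionistically prove $\phi$ to $\mathsf{CM}$"). Abbreviations: $\mathrm{true}:=\mathsf{k}_{\mathsf{CM}}(\mathsf{CM})$, $\mathrm{false}:=\neg\mathrm{true}$, $\phi\leftrightarrow\psi:=(\phi\to\psi)\wedge(\psi\to\phi)$, $\langle M\rangle\phi:=\neg\neg(\mathsf{k}_{\mathsf{CM}}(M)\wedge\phi)$. LIiP is the smallest set of formulas that contains all instances (arbitrary $a$, $M,M'$, $\phi,\psi$) of: the axioms of an adequate Hilbert axiomatization of intuitionistic propositional logic; $\mathsf{k}_a(a)$; $(\mathsf{k}_a(M)\wedge\mathsf{k}_a(M'))\leftrightarrow\mathsf{k}_a((M,M'))$; $[M]\mathsf{k}_{\mathsf{CM}}(M)$; $[M](\phi\to\psi)\to([M]\phi\to[M]\psi)$;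 $[M]\phi\to(\mathsf{k}_{\mathsf{CM}}(M)\to\phi)$; $[M]\phi\to\langle M\rangle\phi$; $\phi\to[M]\phi$; and is closed under modus ponens and the rule: if $\mathsf{k}_{\mathsf{CM}}(M)\to\mathsf{k}_{\mathsf{CM}}(M')$ is in the set then so is $[M']\phi\to[M]\phi$ for every $\phi$. Write $\vdash\phi$ for $\phi\in\mathrm{LIiP}$. Semantics. An LIiP-model is $(\mathcal{S},\sqsubseteq,\{R_M\}_M,\{D_a\}_{a\in\mathcal{A}},\mathcal{V})$ where $\mathcal{S}$ is a nonempty set of states, $\sqsubseteq$ a partial order on $\mathcal{S}$, $D_a(s)$ a set of messages for each agent $a$ and state $s$, and $\mathrm{cl}_a(s)$ denotes the smallest set of messages containing $a$ and $D_a(s)$ that is closed under forming pairs of its elements and under taking both components of pairs in it. $\mathcal{V}:\mathcal{P}\to 2^{\mathcal{S}}$ satisfies $\mathcal{V}(\mathsf{k}_a(M))=\{s: M\in\mathrm{cl}_a(s)\}$ and is upward closed: $s\in\mathcal{V}(P)$ and $s\sqsubseteq s'$ imply $s'\in\mathcal{V}(P)$. Write $M\preceq M'$ iff for all $s\in\mathcal{S}$, $M\in\mathrm{cl}_{\mathsf{CM}}(s)$ implies $M'\in\mathrm{cl}_{\mathsf{CM}}(s)$. The relations $R_M\subseteq\mathcal{S}\times\mathcal{S}$ satisfy: (i) $sR_Ms'$ implies $M\in\mathrm{cl}_{\mathsf{CM}}(s')$; (ii) $M\in\mathrm{cl}_{\mathsf{CM}}(s)$ implies $sR_Ms$; (iii)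 for every $s$ there is $s'$ with $sR_Ms'$; (iv) $R_M\subseteq R_{\mathsf{CM}}={\sqsubseteq}$; (v) if $sR_{\mathsf{CM}}t$ and $tR_Mu$ then $sR_Mu$; (vi) $M\preceq M'$ implies $R_M\subseteq R_{M'}$. Satisfaction: $s\models P$ iff $s\in\mathcal{V}(P)$; $\wedge,\vee$ are evaluated classically at $s$; $s\models\neg\phi$ iff no $s'\sqsupseteq s$ satisfies $\phi$; $s\models\phi\to\psi$ iff every $s'\sqsupseteq s$ satisfying $\phi$ satisfies $\psi$; $s\models[M]\phi$ iff every $s'$ with $sR_Ms'$ satisfies $\phi$. A formula is valid iff it is true at every state of every LIiP-model. *)

theory Defs
  imports Main "HOL-Library.Countable_Set"
begin

text \<open>Messages over agent names of type 'a and data constants of type 'b.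
  The actually admitted data constants form a set Bs (possibly empty).\<close>
datatype ('a, 'b) msg = Ag 'a | Dat 'b | MPair "('a, 'b) msg" "('a, 'b) msg"

datatype ('a, 'b, 'p) atom = K 'a "('a, 'b) msg" | PV 'p

datatype ('a, 'b, 'p) fm =
    Atom "('a, 'b, 'p) atom"
  | And "('a, 'b, 'p) fm" "('a, 'b, 'p) fm"
  | Or "('a, 'b, 'p) fm" "('a, 'b, 'p) fm"
  | Neg "('a, 'b, 'p) fm"
  | Imp "('a, 'b, 'p) fm" "('a, 'b, 'p) fm"
  | Box "('a, 'b) msg" "('a, 'b, 'p) fm"

fun msg_ok :: "'b set \<Rightarrow> ('a, 'b) msg \<Rightarrow> bool" where
  "msg_ok Bs (Ag a) = True"
| "msg_ok Bs (Dat b) = (b \<in> Bs)"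
| "msg_ok Bs (MPair m n) = (msg_ok Bs m \<and> msg_ok Bs n)"

fun atom_ok :: "'b set \<Rightarrow> 'p set \<Rightarrow> ('a, 'b, 'p) atom \<Rightarrow> bool" where
  "atom_ok Bs Ps (K a m) = msg_ok Bs m"
| "atom_ok Bs Ps (PV p) = (p \<in> Ps)"

fun wf_fm :: "'b set \<Rightarrow> 'p set \<Rightarrow> ('a, 'b, 'p) fm \<Rightarrow> bool" where
  "wf_fm Bs Ps (Atom P) = atom_ok Bs Ps P"
| "wf_fm Bs Ps (And f g) = (wf_fm Bs Ps f \<and> wf_fm Bs Ps g)"
| "wf_fm Bs Ps (Or f g) = (wf_fm Bs Ps f \<and> wf_fm Bs Ps g)"
| "wf_fm Bs Ps (Neg f) = wf_fm Bs Ps f"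
| "wf_fm Bs Ps (Imp f g) = (wf_fm Bs Ps f \<and> wf_fm Bs Ps g)"
| "wf_fm Bs Ps (Box m f) = (msg_ok Bs m \<and> wf_fm Bs Ps f)"

abbreviation kn :: "'a \<Rightarrow> ('a, 'b) msg \<Rightarrow> ('a, 'b, 'p) fm" where
  "kn a m \<equiv> Atom (K a m)"

abbreviation Tru :: "'a \<Rightarrow> ('a, 'b, 'p) fm" where
  "Tru cm \<equiv> kn cm (Ag cm)"

abbreviation Iff :: "('a, 'b, 'p) fm \<Rightarrow> ('a, 'b, 'p) fm \<Rightarrow> ('a, 'b, 'p) fm" where
  "Iff f g \<equiv> And (Imp f g) (Imp g f)"

abbreviation Dia :: "'a \<Rightarrow> ('a, 'b) msg \<Rightarrow> ('a, 'b, 'p) fm \<Rightarrow> ('a, 'b, 'p) fm" where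
  "Dia cm m f \<equiv> Neg (Neg (And (kn cm m) f))"

text \<open>Intuitionistic propositional part: Kleene's Hilbert-style axiomatization
  (with negation primitive), whose only rule is modus ponens.\<close>

inductive LIiP :: "'a \<Rightarrow> 'b set \<Rightarrow> 'p set \<Rightarrow> ('a, 'b, 'p) fm \<Rightarrow> bool"
  for cm :: 'a and Bs :: "'b set" and Ps :: "'p set" where
  ax_K: "\<lbrakk>wf_fm Bs Ps f; wf_fm Bs Ps g\<rbrakk> \<Longrightarrow> LIiP cm Bs Ps (Imp f (Imp g f))"
| ax_S: "\<lbrakk>wf_fm Bs Ps f; wf_fm Bs Ps g; wf_fm Bs Ps h\<rbrakk> \<Longrightarrow>
     LIiP cm Bs Ps (Imp (Imp f (Imp g h)) (Imp (Imp f g) (Imp f h)))"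
| ax_conjE1: "\<lbrakk>wf_fm Bs Ps f; wf_fm Bs Ps g\<rbrakk> \<Longrightarrow> LIiP cm Bs Ps (Imp (And f g) f)"
| ax_conjE2: "\<lbrakk>wf_fm Bs Ps f; wf_fm Bs Ps g\<rbrakk> \<Longrightarrow> LIiP cm Bs Ps (Imp (And f g) g)"
| ax_conjI: "\<lbrakk>wf_fm Bs Ps f; wf_fm Bs Ps g\<rbrakk> \<Longrightarrow> LIiP cm Bs Ps (Imp f (Imp g (And f g)))"
| ax_disjI1: "\<lbrakk>wf_fm Bs Ps f; wf_fm Bs Ps g\<rbrakk> \<Longrightarrow> LIiP cm Bs Ps (Imp f (Or f g))"
| ax_disjI2: "\<lbrakk>wf_fm Bs Ps f; wf_fm Bs Ps g\<rbrakk> \<Longrightarrow> LIiP cm Bs Ps (Imp g (Or f g))"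
| ax_disjE: "\<lbrakk>wf_fm Bs Ps f; wf_fm Bs Ps g; wf_fm Bs Ps h\<rbrakk> \<Longrightarrow>
     LIiP cm Bs Ps (Imp (Imp f h) (Imp (Imp g h) (Imp (Or f g) h)))"
| ax_negI: "\<lbrakk>wf_fm Bs Ps f; wf_fm Bs Ps g\<rbrakk> \<Longrightarrow>
     LIiP cm Bs Ps (Imp (Imp f g) (Imp (Imp f (Neg g)) (Neg f)))"
| ax_negE: "\<lbrakk>wf_fm Bs Ps f; wf_fm Bs Ps g\<rbrakk> \<Longrightarrow> LIiP cm Bs Ps (Imp (Neg f) (Imp f g))"
| ax_self: "LIiP cm Bs Ps (kn a (Ag a))"
| ax_pair: "\<lbrakk>msg_ok Bs m; msg_ok Bs m'\<rbrakk> \<Longrightarrow>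
     LIiP cm Bs Ps (Iff (And (kn a m) (kn a m')) (kn a (MPair m m')))"
| ax_boxk: "msg_ok Bs m \<Longrightarrow> LIiP cm Bs Ps (Box m (kn cm m))"
| ax_boxK: "\<lbrakk>msg_ok Bs m; wf_fm Bs Ps f; wf_fm Bs Ps g\<rbrakk> \<Longrightarrow>
     LIiP cm Bs Ps (Imp (Box m (Imp f g)) (Imp (Box m f) (Box m g)))"
| ax_boxT: "\<lbrakk>msg_ok Bs m; wf_fm Bs Ps f\<rbrakk> \<Longrightarrow>
     LIiP cm Bs Ps (Imp (Box m f) (Imp (kn cm m) f))"
| ax_boxD: "\<lbrakk>msg_ok Bs m; wf_fm Bs Ps f\<rbrakk> \<Longrightarrow>
     LIiP cm Bs Ps (Imp (Box m f) (Dia cm m f))"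
| ax_boxI: "\<lbrakk>msg_ok Bs m; wf_fm Bs Ps f\<rbrakk> \<Longrightarrow> LIiP cm Bs Ps (Imp f (Box m f))"
| mp: "\<lbrakk>LIiP cm Bs Ps f; LIiP cm Bs Ps (Imp f g)\<rbrakk> \<Longrightarrow> LIiP cm Bs Ps g"
| mono: "\<lbrakk>LIiP cm Bs Ps (Imp (kn cm m) (kn cm m')); wf_fm Bs Ps f\<rbrakk> \<Longrightarrow>
     LIiP cm Bs Ps (Imp (Box m' f) (Box m f))"

inductive_set cl :: "'a \<Rightarrow> ('a, 'b) msg set \<Rightarrow> ('a, 'b) msg set"
  for a :: 'a and X :: "('a, 'b) msg set" where
  cl_self: "Ag a \<in> cl a X"
| cl_base: "m \<in> X \<Longrightarrow> m \<in> cl a X"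
| cl_pair: "\<lbrakk>m \<in> cl a X; n \<in> cl a X\<rbrakk> \<Longrightarrow> MPair m n \<in> cl a X"
| cl_fst: "MPair m n \<in> cl a X \<Longrightarrow> m \<in> cl a X"
| cl_snd: "MPair m n \<in> cl a X \<Longrightarrow> n \<in> cl a X"

definition is_model ::
  "'a \<Rightarrow> 'b set \<Rightarrow> 'p set \<Rightarrow> 's set \<Rightarrow> ('s \<Rightarrow> 's \<Rightarrow> bool)
   \<Rightarrow> (('a, 'b) msg \<Rightarrow> 's \<Rightarrow> 's \<Rightarrow> bool) \<Rightarrow> ('a \<Rightarrow> 's \<Rightarrow> ('a, 'b) msg set)
   \<Rightarrow> (('a, 'b, 'p) atom \<Rightarrow> 's set) \<Rightarrow> bool" where
  "is_model cm Bs Ps S le R D V \<longleftrightarrow>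
     S \<noteq> {} \<and>
     (\<forall>s t. le s t \<longrightarrow> s \<in> S \<and> t \<in> S) \<and>
     (\<forall>s\<in>S. le s s) \<and>
     (\<forall>s t u. le s t \<longrightarrow> le t u \<longrightarrow> le s u) \<and>
     (\<forall>s t. le s t \<longrightarrow> le t s \<longrightarrow> s = t) \<and>
     (\<forall>a. \<forall>s\<in>S. \<forall>m\<in>D a s. msg_ok Bs m) \<and>
     (\<forall>a m. msg_ok Bs m \<longrightarrow> V (K a m) = {s\<in>S. m \<in> cl a (D a s)}) \<and>
     (\<forall>P. atom_ok Bs Ps P \<longrightarrow> V P \<subseteq> S) \<and>
     (\<forall>P s t. atom_ok Bs Ps P \<longrightarrow> s \<in> V P \<longrightarrow> le s t \<longrightarrow> t \<in> V P) \<and>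
     (\<forall>m. msg_ok Bs m \<longrightarrow>
        (\<forall>s t. R m s t \<longrightarrow> m \<in> cl cm (D cm t)) \<and>
        (\<forall>s\<in>S. m \<in> cl cm (D cm s) \<longrightarrow> R m s s) \<and>
        (\<forall>s\<in>S. \<exists>t. R m s t) \<and>
        (\<forall>s t. R m s t \<longrightarrow> le s t) \<and>
        (\<forall>s t u. le s t \<longrightarrow> R m t u \<longrightarrow> R m s u)) \<and>
     R (Ag cm) = le \<and>
     (\<forall>m m'. msg_ok Bs m \<longrightarrow> msg_ok Bs m' \<longrightarrow>
        (\<forall>s\<in>S. m \<in> cl cm (D cm s) \<longrightarrow> m' \<in> cl cm (D cm s)) \<longrightarrow>
        (\<forall>s t. R m s t \<longrightarrow> R m' s t))"

fun sat :: "('s \<Rightarrow> 's \<Rightarrow> bool) \<Rightarrow> (('a, 'b) msg \<Rightarrow> 's \<Rightarrow> 's \<Rightarrow> bool)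
   \<Rightarrow> (('a, 'b, 'p) atom \<Rightarrow> 's set) \<Rightarrow> 's \<Rightarrow> ('a, 'b, 'p) fm \<Rightarrow> bool" where
  "sat le R V s (Atom P) = (s \<in> V P)"
| "sat le R V s (And f g) = (sat le R V s f \<and> sat le R V s g)"
| "sat le R V s (Or f g) = (sat le R V s f \<or> sat le R V s g)"
| "sat le R V s (Neg f) = (\<forall>t. le s t \<longrightarrow> \<not> sat le R V t f)"
| "sat le R V s (Imp f g) = (\<forall>t. le s t \<longrightarrow> sat le R V t f \<longrightarrow> sat le R V t g)"
| "sat le R V s (Box m f) = (\<forall>t. R m s t \<longrightarrow> sat le R V t f)"

definition valid :: "'a \<Rightarrow> 'b set \<Rightarrow> 'p set \<Rightarrow> 's itself \<Rightarrow> ('a, 'b, 'p) fm \<Rightarrow> bool" where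
  "valid cm Bs Ps (_ :: 's itself) f \<longleftrightarrow>
     (\<forall>(S :: 's set) le R D V. is_model cm Bs Ps S le R D V \<longrightarrow> (\<forall>s\<in>S. sat le R V s f))"

end

theory Submission
  imports Defs
begin

text \<open>Soundness is a check of each axiom and rule, using that truth is persistent along the
  order. For completeness, the canonical model has the prime theories (deductively closed,
  consistent, with the disjunction property) as states, ordered by inclusion, and relates T to U
  by R_M iff U contains T, k_CM(M) and every \<phi> with [M]\<phi> in T. The truth lemma for
  negation and implication rests on the deduction theorem and Lindenbaum's lemma; for [M] one
  lifts a derivation from T, k_CM(M) and the \<phi> with [M]\<phi> in T to a derivation of [M]-formulas
  of T. Seriality of R_M comes from [M]\<phi> \<rightarrow> <M>\<phi>, and condition (vi) on models is exactly
  the inference rule of LIiP.\<close>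

lemma LIiP_wf_fm: "LIiP cm Bs Ps f \<Longrightarrow> wf_fm Bs Ps f"
  by (induction rule: LIiP.induct) auto

section \<open>Soundness\<close>

locale LIiP_model =
  fixes cm :: 'a and Bs :: "'b set" and Ps :: "'p set" and S :: "'s set"
    and le :: "'s \<Rightarrow> 's \<Rightarrow> bool" and R :: "('a, 'b) msg \<Rightarrow> 's \<Rightarrow> 's \<Rightarrow> bool"
    and D :: "'a \<Rightarrow> 's \<Rightarrow> ('a, 'b) msg set" and V :: "('a, 'b, 'p) atom \<Rightarrow> 's set"
  assumes model: "is_model cm Bs Ps S le R D V"
begin

lemma model_conjuncts:
  "\<forall>s t. le s t \<longrightarrow> s \<in> S \<and> t \<in> S"
  "\<forall>s\<in>S. le s s"
  "\<forall>s t u. le s t \<longrightarrow> le t u \<longrightarrow> le s u"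
  "\<forall>a m. msg_ok Bs m \<longrightarrow> V (K a m) = {s\<in>S. m \<in> cl a (D a s)}"
  "\<forall>P s t. atom_ok Bs Ps P \<longrightarrow> s \<in> V P \<longrightarrow> le s t \<longrightarrow> t \<in> V P"
  "\<forall>m. msg_ok Bs m \<longrightarrow>
     (\<forall>s t. R m s t \<longrightarrow> m \<in> cl cm (D cm t)) \<and>
     (\<forall>s\<in>S. m \<in> cl cm (D cm s) \<longrightarrow> R m s s) \<and>
     (\<forall>s\<in>S. \<exists>t. R m s t) \<and>
     (\<forall>s t. R m s t \<longrightarrow> le s t) \<and>
     (\<forall>s t u. le s t \<longrightarrow> R m t u \<longrightarrow> R m s u)"
  "\<forall>m m'. msg_ok Bs m \<longrightarrow> msg_ok Bs m' \<longrightarrow>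
     (\<forall>s\<in>S. m \<in> cl cm (D cm s) \<longrightarrow> m' \<in> cl cm (D cm s)) \<longrightarrow>
     (\<forall>s t. R m s t \<longrightarrow> R m' s t)"
  using model unfolding is_model_def by - (elim conjE, assumption)+

lemma le_in_carrier: "le s t \<Longrightarrow> s \<in> S \<and> t \<in> S"
  using model_conjuncts(1) by blast

lemma le_refl: "s \<in> S \<Longrightarrow> le s s"
  using model_conjuncts(2) by blast

lemma le_refl_right: "le s t \<Longrightarrow> le t t"
  using le_in_carrier le_refl by blast

lemma le_trans: "le s t \<Longrightarrow> le t u \<Longrightarrow> le s u"
  using model_conjuncts(3) by blast

lemma V_kn: "msg_ok Bs m \<Longrightarrow> V (K a m) = {s\<in>S. m \<in> cl a (D a s)}"
  using model_conjuncts(4) by blast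

lemma V_mono: "atom_ok Bs Ps P \<Longrightarrow> s \<in> V P \<Longrightarrow> le s t \<Longrightarrow> t \<in> V P"
  using model_conjuncts(5) by blast

context
  fixes m :: "('a, 'b) msg" assumes m: "msg_ok Bs m"
begin

lemma R_known: "R m s t \<Longrightarrow> m \<in> cl cm (D cm t)"
  using model_conjuncts(6) m by blast

lemma R_refl_known: "s \<in> S \<Longrightarrow> m \<in> cl cm (D cm s) \<Longrightarrow> R m s s"
  using model_conjuncts(6) m by blast

lemma R_serial: "s \<in> S \<Longrightarrow> \<exists>t. R m s t"
  using model_conjuncts(6) m by blast

lemma R_le: "R m s t \<Longrightarrow> le s t"
  using model_conjuncts(6) m by blast

lemma le_R_trans: "le s t \<Longrightarrow> R m t u \<Longrightarrow> R m s u"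
  using model_conjuncts(6) m by blast

end

lemma R_mono:
  "\<lbrakk>msg_ok Bs m; msg_ok Bs m'; \<forall>s\<in>S. m \<in> cl cm (D cm s) \<longrightarrow> m' \<in> cl cm (D cm s); R m s t\<rbrakk>
   \<Longrightarrow> R m' s t"
  using model_conjuncts(7) by blast

lemma sat_mono: "wf_fm Bs Ps f \<Longrightarrow> sat le R V s f \<Longrightarrow> le s t \<Longrightarrow> sat le R V t f"
proof (induction f arbitrary: s t)
  case (Atom P)
  then show ?case using V_mono by auto
next
  case (Neg f)
  then show ?case using le_trans by (simp only: sat.simps) blast
next
  case (Imp f g)
  then show ?case using le_trans by (simp only: sat.simps) blast
next
  case (Box m f)
  then show ?case using le_R_trans by (simp only: sat.simps wf_fm.simps) blast
qed auto

lemma sat_LIiP: "LIiP cm Bs Ps f \<Longrightarrow> s \<in> S \<Longrightarrow> sat le R V s f"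
proof (induction arbitrary: s rule: LIiP.induct)
  case (ax_K f g)
  then show ?case using sat_mono by (simp only: sat.simps) blast
next
  case (ax_S f g h)
  show ?case using le_trans le_refl_right by (simp only: sat.simps) blast
next
  case (ax_conjE1 f g)
  show ?case by simp
next
  case (ax_conjE2 f g)
  show ?case by simp
next
  case (ax_conjI f g)
  then show ?case using sat_mono by (simp only: sat.simps) blast
next
  case (ax_disjI1 f g)
  show ?case by simp
next
  case (ax_disjI2 f g)
  show ?case by simp
next
  case (ax_disjE f g h)
  show ?case using le_trans by (simp only: sat.simps) blast
next
  case (ax_negI f g)
  show ?case using le_trans le_refl_right by (simp only: sat.simps) blast
next
  case (ax_negE f g)
  show ?case by (simp only: sat.simps) blast
next
  case (ax_self a)
  then show ?case by (simp add: V_kn cl.cl_self)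
next
  case (ax_pair m m' a)
  then show ?case using le_in_carrier by (auto simp: V_kn intro: cl.intros)
next
  case (ax_boxk m)
  then show ?case using R_known R_le le_in_carrier by (fastforce simp: V_kn)
next
  case (ax_boxK m f g)
  then show ?case using le_R_trans R_le le_refl_right by (simp only: sat.simps) blast
next
  case (ax_boxT m f)
  then show ?case using R_refl_known le_R_trans by (auto simp: V_kn)
next
  case (ax_boxD m f)
  show ?case
  proof (simp only: sat.simps, intro allI impI notI)
    fix t u
    assume "le s t" "\<forall>v. R m t v \<longrightarrow> sat le R V v f" "le t u"
      and no_witness: "\<forall>v. le u v \<longrightarrow> \<not> (v \<in> V (K cm m) \<and> sat le R V v f)"
    obtain v where v: "R m u v"
      using R_serial[OF ax_boxD(1)] le_in_carrier[OF \<open>le t u\<close>] by blast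
    have "R m t v" using le_R_trans[OF ax_boxD(1) \<open>le t u\<close> v] .
    moreover have "le u v" using R_le[OF ax_boxD(1) v] .
    moreover have "v \<in> V (K cm m)"
      using R_known[OF ax_boxD(1) v] le_in_carrier[OF \<open>le u v\<close>] by (simp add: V_kn[OF ax_boxD(1)])
    ultimately show False using no_witness \<open>\<forall>v. R m t v \<longrightarrow> sat le R V v f\<close> by blast
  qed
next
  case (ax_boxI m f)
  then show ?case using sat_mono R_le by (simp only: sat.simps) blast
next
  case (mp f g)
  then show ?case using le_refl by simp
next
  case (mono m m' f)
  then have "msg_ok Bs m" "msg_ok Bs m'" by (auto dest: LIiP_wf_fm)
  moreover have "m' \<in> cl cm (D cm s)" if "s \<in> S" "m \<in> cl cm (D cm s)" for s
    using mono.IH[OF \<open>s \<in> S\<close>] that le_refl calculation by (auto simp: V_kn)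
  ultimately show ?case using R_mono by (simp only: sat.simps) blast
qed

end

lemma valid_if_LIiP: "LIiP cm Bs Ps f \<Longrightarrow> valid cm Bs Ps TYPE('s) f"
  unfolding valid_def by (blast intro: LIiP_model.sat_LIiP[OF LIiP_model.intro])

section \<open>Derivations from hypotheses and prime theories\<close>

text \<open>Hypotheses are closed under modus ponens only; the monotonicity rule applies to theorems.
  This is what makes the deduction theorem hold.\<close>

inductive derives :: "'a \<Rightarrow> 'b set \<Rightarrow> 'p set \<Rightarrow> ('a, 'b, 'p) fm set \<Rightarrow> ('a, 'b, 'p) fm \<Rightarrow> bool"
  for cm Bs Ps G where
  derives_LIiP: "LIiP cm Bs Ps f \<Longrightarrow> derives cm Bs Ps G f"
| derives_hyp: "f \<in> G \<Longrightarrow> derives cm Bs Ps G f"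
| derives_mp: "\<lbrakk>derives cm Bs Ps G f; derives cm Bs Ps G (Imp f g)\<rbrakk> \<Longrightarrow> derives cm Bs Ps G g"

context
  fixes cm :: 'a and Bs :: "'b set" and Ps :: "'p set"
begin

lemma derives_wf_fm:
  "derives cm Bs Ps G f \<Longrightarrow> G \<subseteq> {h. wf_fm Bs Ps h} \<Longrightarrow> wf_fm Bs Ps f"
  by (induction rule: derives.induct) (auto dest: LIiP_wf_fm)

lemma derives_mono: "derives cm Bs Ps G f \<Longrightarrow> G \<subseteq> H \<Longrightarrow> derives cm Bs Ps H f"
  by (induction rule: derives.induct) (auto intro: derives.intros)

lemma derives_empty_imp_LIiP: "derives cm Bs Ps {} f \<Longrightarrow> LIiP cm Bs Ps f"
  by (induction rule: derives.induct) (auto intro: LIiP.mp)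

lemma derives_finite_subset:
  "derives cm Bs Ps G f \<Longrightarrow> \<exists>G0. finite G0 \<and> G0 \<subseteq> G \<and> derives cm Bs Ps G0 f"
proof (induction rule: derives.induct)
  case (derives_LIiP f)
  then show ?case by (auto intro: derives.intros)
next
  case (derives_hyp f)
  then show ?case by (intro exI[of _ "{f}"]) (auto intro: derives.intros)
next
  case (derives_mp f g)
  then obtain A B where "finite A" "A \<subseteq> G" "derives cm Bs Ps A f"
    and "finite B" "B \<subseteq> G" "derives cm Bs Ps B (Imp f g)"
    by blast
  then show ?case
    by (intro exI[of _ "A \<union> B"]) (auto intro: derives.derives_mp derives_mono)
qed

lemma LIiP_imp_refl:
  assumes "wf_fm Bs Ps f"
  shows "LIiP cm Bs Ps (Imp f f)"
proof -
  have "LIiP cm Bs Ps (Imp (Imp f (Imp (Imp f f) f)) (Imp (Imp f (Imp f f)) (Imp f f)))"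
    using assms by (intro LIiP.ax_S) auto
  moreover have "LIiP cm Bs Ps (Imp f (Imp (Imp f f) f))" "LIiP cm Bs Ps (Imp f (Imp f f))"
    using assms by (auto intro: LIiP.ax_K)
  ultimately show ?thesis by (metis LIiP.mp)
qed

lemma LIiP_not_contradiction:
  assumes "wf_fm Bs Ps f"
  shows "LIiP cm Bs Ps (Neg (And f (Neg f)))"
proof -
  have "LIiP cm Bs Ps (Imp (Imp (And f (Neg f)) f)
      (Imp (Imp (And f (Neg f)) (Neg f)) (Neg (And f (Neg f)))))"
    using assms by (intro LIiP.ax_negI) auto
  moreover have "LIiP cm Bs Ps (Imp (And f (Neg f)) f)" "LIiP cm Bs Ps (Imp (And f (Neg f)) (Neg f))"
    using assms by (auto intro: LIiP.ax_conjE1 LIiP.ax_conjE2)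
  ultimately show ?thesis by (metis LIiP.mp)
qed

lemma derives_LIiP_mp:
  "LIiP cm Bs Ps (Imp f g) \<Longrightarrow> derives cm Bs Ps G f \<Longrightarrow> derives cm Bs Ps G g"
  by (rule derives_mp[OF _ derives_LIiP])

lemma derives_deduction:
  assumes "derives cm Bs Ps (insert h G) f" and "G \<subseteq> {h. wf_fm Bs Ps h}" and "wf_fm Bs Ps h"
  shows "derives cm Bs Ps G (Imp h f)"
  using assms
proof (induction rule: derives.induct)
  case (derives_LIiP f)
  have "LIiP cm Bs Ps (Imp f (Imp h f))"
    using LIiP_wf_fm[OF derives_LIiP.hyps] derives_LIiP.prems(2) by (rule LIiP.ax_K)
  moreover have "derives cm Bs Ps G f" using derives_LIiP.hyps by (rule derives.derives_LIiP)
  ultimately show ?case by (rule derives_LIiP_mp)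
next
  case (derives_hyp f)
  then consider "f = h" | "f \<in> G" "wf_fm Bs Ps f" by auto
  then show ?case
  proof cases
    case 1
    then show ?thesis using derives_hyp.prems by (simp add: derives.derives_LIiP LIiP_imp_refl)
  next
    case 2
    then have "LIiP cm Bs Ps (Imp f (Imp h f))" using derives_hyp.prems by (intro LIiP.ax_K)
    then show ?thesis using derives.derives_hyp[OF \<open>f \<in> G\<close>] by (rule derives_LIiP_mp)
  qed
next
  case (derives_mp f g)
  then have "wf_fm Bs Ps (Imp f g)" by (intro derives_wf_fm[of "insert h G"]) auto
  then have "LIiP cm Bs Ps (Imp (Imp h (Imp f g)) (Imp (Imp h f) (Imp h g)))"
    using derives_mp.prems by (intro LIiP.ax_S) auto
  then have "derives cm Bs Ps G (Imp (Imp h f) (Imp h g))"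
    using derives_mp.IH(2)[OF derives_mp.prems] by (rule derives_LIiP_mp)
  with derives_mp.IH(1)[OF derives_mp.prems] show ?case by (rule derives.derives_mp)
qed

lemma LIiP_deduction: "derives cm Bs Ps {h} f \<Longrightarrow> wf_fm Bs Ps h \<Longrightarrow> LIiP cm Bs Ps (Imp h f)"
  by (rule derives_empty_imp_LIiP, rule derives_deduction) auto

definition prime_theory :: "('a, 'b, 'p) fm set \<Rightarrow> bool" where
  "prime_theory T \<longleftrightarrow> T \<subseteq> {f. wf_fm Bs Ps f}
     \<and> (\<forall>f. derives cm Bs Ps T f \<longrightarrow> f \<in> T)
     \<and> (\<forall>f g. Or f g \<in> T \<longrightarrow> f \<in> T \<or> g \<in> T)
     \<and> (\<forall>f. f \<in> T \<longrightarrow> Neg f \<notin> T)"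

lemma maximal_nonderiving_exists:
  assumes "G \<subseteq> {f. wf_fm Bs Ps f}" and "\<not> derives cm Bs Ps G g"
  obtains M where "G \<subseteq> M" "M \<subseteq> {f. wf_fm Bs Ps f}" "\<not> derives cm Bs Ps M g"
    "\<And>f. wf_fm Bs Ps f \<Longrightarrow> f \<notin> M \<Longrightarrow> derives cm Bs Ps (insert f M) g"
proof -
  define A where "A = {M. G \<subseteq> M \<and> M \<subseteq> {f. wf_fm Bs Ps f} \<and> \<not> derives cm Bs Ps M g}"
  have "\<exists>U\<in>A. \<forall>X\<in>C. X \<subseteq> U" if "C \<in> chains A" for C
  proof (cases "C = {}")
    case True
    then show ?thesis using assms by (auto simp: A_def)
  next
    case False
    have chain: "subset.chain A C" and "C \<subseteq> A"
      using \<open>C \<in> chains A\<close> by (auto simp: chains_alt_def subset.chain_def)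
    have "\<not> derives cm Bs Ps (\<Union>C) g"
    proof
      assume "derives cm Bs Ps (\<Union>C) g"
      then obtain G0 where "finite G0" "G0 \<subseteq> \<Union>C" "derives cm Bs Ps G0 g"
        using derives_finite_subset by blast
      moreover obtain B where "B \<in> C" "G0 \<subseteq> B"
        using finite_subset_Union_chain[OF \<open>finite G0\<close> \<open>G0 \<subseteq> \<Union>C\<close> False chain] by metis
      ultimately have "derives cm Bs Ps B g" by (blast intro: derives_mono)
      then show False using \<open>B \<in> C\<close> \<open>C \<subseteq> A\<close> by (auto simp: A_def)
    qed
    moreover have "G \<subseteq> \<Union>C" "\<Union>C \<subseteq> {f. wf_fm Bs Ps f}"
      using False \<open>C \<subseteq> A\<close> unfolding A_def by blast+
    ultimately have "\<Union>C \<in> A" by (simp add: A_def)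
    then show ?thesis by blast
  qed
  then obtain M where "M \<in> A" and maximal: "\<forall>X\<in>A. M \<subseteq> X \<longrightarrow> X = M"
    using Zorn_Lemma2[of A] by blast
  have "G \<subseteq> M" "M \<subseteq> {f. wf_fm Bs Ps f}" "\<not> derives cm Bs Ps M g"
    using \<open>M \<in> A\<close> by (simp_all add: A_def)
  moreover have "derives cm Bs Ps (insert f M) g" if "wf_fm Bs Ps f" "f \<notin> M" for f
  proof (rule ccontr)
    assume "\<not> derives cm Bs Ps (insert f M) g"
    then have "insert f M \<in> A" using \<open>M \<in> A\<close> that(1) unfolding A_def by blast
    then show False using maximal that by blast
  qed
  ultimately show thesis by (rule that)
qed

lemma maximal_nonderiving_prime_theory:
  assumes wf: "M \<subseteq> {f. wf_fm Bs Ps f}" "wf_fm Bs Ps g" and nd: "\<not> derives cm Bs Ps M g"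
    and maximal: "\<And>f. wf_fm Bs Ps f \<Longrightarrow> f \<notin> M \<Longrightarrow> derives cm Bs Ps (insert f M) g"
  shows "prime_theory M" and "g \<notin> M"
proof -
  have imp_g: "derives cm Bs Ps M (Imp f g)" if "wf_fm Bs Ps f" "f \<notin> M" for f
    using derives_deduction[OF maximal[OF that] wf(1) that(1)] .
  have "f \<in> M" if "derives cm Bs Ps M f" for f
    using imp_g[of f] derives_wf_fm[OF that wf(1)] derives_mp[OF that] nd by blast
  moreover have "f \<in> M \<or> h \<in> M" if "Or f h \<in> M" for f h
  proof (rule ccontr)
    assume "\<not> (f \<in> M \<or> h \<in> M)"
    moreover have "wf_fm Bs Ps f" "wf_fm Bs Ps h" using that wf by auto
    ultimately have f_g: "derives cm Bs Ps M (Imp f g)" and h_g: "derives cm Bs Ps M (Imp h g)"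
      using imp_g by auto
    have "LIiP cm Bs Ps (Imp (Imp f g) (Imp (Imp h g) (Imp (Or f h) g)))"
      using \<open>wf_fm Bs Ps f\<close> \<open>wf_fm Bs Ps h\<close> wf(2) by (rule LIiP.ax_disjE)
    then have "derives cm Bs Ps M (Imp (Or f h) g)"
      using derives_mp[OF h_g derives_LIiP_mp] f_g by blast
    then show False using derives_mp[OF derives_hyp[OF that]] nd by blast
  qed
  moreover have "Neg f \<notin> M" if "f \<in> M" for f
  proof
    assume "Neg f \<in> M"
    then have "LIiP cm Bs Ps (Imp (Neg f) (Imp f g))" using wf by (intro LIiP.ax_negE) auto
    then have "derives cm Bs Ps M (Imp f g)" using derives_hyp[OF \<open>Neg f \<in> M\<close>] by (rule derives_LIiP_mp)
    then show False using derives_mp[OF derives_hyp[OF that]] nd by blast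
  qed
  ultimately show "prime_theory M" unfolding prime_theory_def using wf(1) by blast
  show "g \<notin> M" using derives_hyp[of g M] nd by blast
qed

lemma lindenbaum:
  assumes "G \<subseteq> {f. wf_fm Bs Ps f}" and "wf_fm Bs Ps g" and "\<not> derives cm Bs Ps G g"
  obtains T where "G \<subseteq> T" "prime_theory T" "g \<notin> T"
proof -
  obtain M where M: "G \<subseteq> M" "M \<subseteq> {f. wf_fm Bs Ps f}" "\<not> derives cm Bs Ps M g"
    "\<And>f. wf_fm Bs Ps f \<Longrightarrow> f \<notin> M \<Longrightarrow> derives cm Bs Ps (insert f M) g"
    using maximal_nonderiving_exists[OF assms(1,3)] by blast
  show thesis
    by (rule that[OF M(1) maximal_nonderiving_prime_theory[OF M(2) assms(2) M(3,4)]])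
qed

context
  fixes T :: "('a, 'b, 'p) fm set"
  assumes T: "prime_theory T"
begin

lemma prime_theory_wf_fm: "f \<in> T \<Longrightarrow> wf_fm Bs Ps f"
  using T unfolding prime_theory_def by blast

lemma prime_theory_closed: "derives cm Bs Ps T f \<Longrightarrow> f \<in> T"
  using T unfolding prime_theory_def by blast

lemma prime_theory_LIiP: "LIiP cm Bs Ps f \<Longrightarrow> f \<in> T"
  by (rule prime_theory_closed[OF derives_LIiP])

lemma prime_theory_mp: "f \<in> T \<Longrightarrow> Imp f g \<in> T \<Longrightarrow> g \<in> T"
  by (rule prime_theory_closed[OF derives_mp[OF derives_hyp derives_hyp]])

lemma prime_theory_LIiP_mp: "LIiP cm Bs Ps (Imp f g) \<Longrightarrow> f \<in> T \<Longrightarrow> g \<in> T"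
  using prime_theory_mp prime_theory_LIiP by blast

lemma prime_theory_consistent: "f \<in> T \<Longrightarrow> Neg f \<notin> T"
  using T unfolding prime_theory_def by blast

lemma prime_theory_And_iff:
  assumes "wf_fm Bs Ps f" "wf_fm Bs Ps g"
  shows "And f g \<in> T \<longleftrightarrow> f \<in> T \<and> g \<in> T"
  using prime_theory_LIiP_mp[OF LIiP.ax_conjE1[OF assms]] prime_theory_LIiP_mp[OF LIiP.ax_conjE2[OF assms]]
    prime_theory_LIiP_mp[OF LIiP.ax_conjI[OF assms]] prime_theory_mp
  by blast

lemma prime_theory_Or_iff:
  assumes "wf_fm Bs Ps f" "wf_fm Bs Ps g"
  shows "Or f g \<in> T \<longleftrightarrow> f \<in> T \<or> g \<in> T"
  using T prime_theory_LIiP_mp[OF LIiP.ax_disjI1[OF assms]] prime_theory_LIiP_mp[OF LIiP.ax_disjI2[OF assms]]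
  unfolding prime_theory_def by blast

lemma prime_theory_kn_MPair_iff:
  assumes "msg_ok Bs m" "msg_ok Bs n"
  shows "kn a (MPair m n) \<in> T \<longleftrightarrow> kn a m \<in> T \<and> kn a n \<in> T"
proof -
  have "Iff (And (kn a m) (kn a n)) (kn a (MPair m n)) \<in> T"
    by (rule prime_theory_LIiP[OF LIiP.ax_pair[OF assms, where a = a]])
  then have "Imp (And (kn a m) (kn a n)) (kn a (MPair m n)) \<in> T"
    and "Imp (kn a (MPair m n)) (And (kn a m) (kn a n)) \<in> T"
    using assms by (simp_all add: prime_theory_And_iff)
  then have "And (kn a m) (kn a n) \<in> T \<longleftrightarrow> kn a (MPair m n) \<in> T"
    using prime_theory_mp by blast
  with assms show ?thesis by (simp add: prime_theory_And_iff)
qed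

lemma prime_theory_Box_kn: "msg_ok Bs m \<Longrightarrow> kn cm m \<in> T \<Longrightarrow> Box m f \<in> T \<Longrightarrow> f \<in> T"
  using prime_theory_LIiP_mp[OF LIiP.ax_boxT] prime_theory_wf_fm prime_theory_mp
  by (metis wf_fm.simps(6))

end

definition box_context :: "('a, 'b, 'p) fm set \<Rightarrow> ('a, 'b) msg \<Rightarrow> ('a, 'b, 'p) fm set" where
  "box_context T m = insert (kn cm m) (T \<union> {f. Box m f \<in> T})"

lemma box_context_wf_fm:
  "prime_theory T \<Longrightarrow> msg_ok Bs m \<Longrightarrow> box_context T m \<subseteq> {f. wf_fm Bs Ps f}"
  unfolding box_context_def using prime_theory_wf_fm[of T] by fastforce

lemma prime_theory_Box_if_derives:
  assumes T: "prime_theory T" and m: "msg_ok Bs m"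
    and "derives cm Bs Ps (box_context T m) f"
  shows "Box m f \<in> T"
  using assms(3)
proof (induction rule: derives.induct)
  case (derives_LIiP f)
  then have "LIiP cm Bs Ps (Box m f)"
    using LIiP.mp[OF _ LIiP.ax_boxI[OF m LIiP_wf_fm]] by blast
  then show ?case by (rule prime_theory_LIiP[OF T])
next
  case (derives_hyp f)
  then consider "f = kn cm m" | "f \<in> T" | "Box m f \<in> T"
    unfolding box_context_def by blast
  then show ?case
  proof cases
    case 1
    then show ?thesis using prime_theory_LIiP[OF T LIiP.ax_boxk[OF m]] by simp
  next
    case 2
    then show ?thesis
      using prime_theory_LIiP_mp[OF T LIiP.ax_boxI[OF m prime_theory_wf_fm[OF T]]] by blast
  qed
next
  case (derives_mp f g)
  have "wf_fm Bs Ps f" "wf_fm Bs Ps g"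
    using prime_theory_wf_fm[OF T derives_mp.IH(2)] by auto
  then have "Imp (Box m (Imp f g)) (Imp (Box m f) (Box m g)) \<in> T"
    by (rule prime_theory_LIiP[OF T LIiP.ax_boxK[OF m]])
  then show ?case using prime_theory_mp[OF T] derives_mp.IH by blast
qed

lemma prime_theory_Neg_iff:
  assumes T: "prime_theory T" and wf: "wf_fm Bs Ps f"
  shows "Neg f \<in> T \<longleftrightarrow> (\<forall>U. prime_theory U \<longrightarrow> T \<subseteq> U \<longrightarrow> f \<notin> U)"
proof
  show "\<forall>U. prime_theory U \<longrightarrow> T \<subseteq> U \<longrightarrow> f \<notin> U" if "Neg f \<in> T"
    using that prime_theory_consistent by blast
next
  assume no_extension: "\<forall>U. prime_theory U \<longrightarrow> T \<subseteq> U \<longrightarrow> f \<notin> U"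
  show "Neg f \<in> T"
  proof (rule ccontr)
    assume "Neg f \<notin> T"
    have T_wf: "T \<subseteq> {f. wf_fm Bs Ps f}" using prime_theory_wf_fm[OF T] by blast
    have "\<not> derives cm Bs Ps (insert f T) (Neg f)"
    proof
      assume "derives cm Bs Ps (insert f T) (Neg f)"
      then have "derives cm Bs Ps T (Imp f (Neg f))" by (rule derives_deduction[OF _ T_wf wf])
      moreover have "LIiP cm Bs Ps (Imp (Imp f f) (Imp (Imp f (Neg f)) (Neg f)))"
        using wf by (intro LIiP.ax_negI) auto
      then have "derives cm Bs Ps T (Imp (Imp f (Neg f)) (Neg f))"
        using derives_LIiP[OF LIiP_imp_refl[OF wf]] by (rule derives_LIiP_mp)
      ultimately have "Neg f \<in> T" by (rule prime_theory_closed[OF T derives_mp])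
      with \<open>Neg f \<notin> T\<close> show False by contradiction
    qed
    moreover have "insert f T \<subseteq> {f. wf_fm Bs Ps f}" using T_wf wf by blast
    moreover have "wf_fm Bs Ps (Neg f)" using wf by simp
    ultimately obtain U where "insert f T \<subseteq> U" "prime_theory U"
      using lindenbaum by metis
    then show False using no_extension by blast
  qed
qed

lemma prime_theory_Imp_iff:
  assumes T: "prime_theory T" and wf: "wf_fm Bs Ps f" "wf_fm Bs Ps g"
  shows "Imp f g \<in> T \<longleftrightarrow> (\<forall>U. prime_theory U \<longrightarrow> T \<subseteq> U \<longrightarrow> f \<in> U \<longrightarrow> g \<in> U)"
proof
  show "\<forall>U. prime_theory U \<longrightarrow> T \<subseteq> U \<longrightarrow> f \<in> U \<longrightarrow> g \<in> U" if "Imp f g \<in> T"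
    using that prime_theory_mp by blast
next
  assume no_extension: "\<forall>U. prime_theory U \<longrightarrow> T \<subseteq> U \<longrightarrow> f \<in> U \<longrightarrow> g \<in> U"
  show "Imp f g \<in> T"
  proof (rule ccontr)
    assume "Imp f g \<notin> T"
    have T_wf: "T \<subseteq> {f. wf_fm Bs Ps f}" using prime_theory_wf_fm[OF T] by blast
    have "\<not> derives cm Bs Ps (insert f T) g"
    proof
      assume "derives cm Bs Ps (insert f T) g"
      then have "Imp f g \<in> T"
        by (rule prime_theory_closed[OF T derives_deduction[OF _ T_wf wf(1)]])
      with \<open>Imp f g \<notin> T\<close> show False by contradiction
    qed
    moreover have "insert f T \<subseteq> {f. wf_fm Bs Ps f}" using T_wf wf(1) by blast
    ultimately obtain U where "insert f T \<subseteq> U" "prime_theory U" "g \<notin> U"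
      using lindenbaum[OF _ wf(2)] by metis
    then show False using no_extension by blast
  qed
qed

lemma prime_theory_Box_iff:
  assumes T: "prime_theory T" and m: "msg_ok Bs m" and wf: "wf_fm Bs Ps f"
  shows "Box m f \<in> T \<longleftrightarrow> (\<forall>U. prime_theory U \<longrightarrow> box_context T m \<subseteq> U \<longrightarrow> f \<in> U)"
proof
  show "\<forall>U. prime_theory U \<longrightarrow> box_context T m \<subseteq> U \<longrightarrow> f \<in> U" if "Box m f \<in> T"
    using that unfolding box_context_def by blast
next
  assume no_extension: "\<forall>U. prime_theory U \<longrightarrow> box_context T m \<subseteq> U \<longrightarrow> f \<in> U"
  show "Box m f \<in> T"
  proof (rule ccontr)
    assume "Box m f \<notin> T"
    then have "\<not> derives cm Bs Ps (box_context T m) f"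
      using prime_theory_Box_if_derives[OF T m] by metis
    then obtain U where "box_context T m \<subseteq> U" "prime_theory U" "f \<notin> U"
      using lindenbaum[OF box_context_wf_fm[OF T m] wf] by metis
    then show False using no_extension by blast
  qed
qed

lemma prime_theory_Box_successor:
  assumes T: "prime_theory T" and m: "msg_ok Bs m"
  obtains U where "prime_theory U" "box_context T m \<subseteq> U"
proof -
  let ?k = "kn cm m :: ('a, 'b, 'p) fm"
  have wf: "wf_fm Bs Ps (Neg ?k)" using m by simp
  have "\<not> derives cm Bs Ps (box_context T m) (Neg ?k)"
  proof
    assume "derives cm Bs Ps (box_context T m) (Neg ?k)"
    then have "Box m (Neg ?k) \<in> T" by (rule prime_theory_Box_if_derives[OF T m])
    then have "Dia cm m (Neg ?k) \<in> T"
      using wf by (intro prime_theory_LIiP_mp[OF T LIiP.ax_boxD[OF m]])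
    moreover have "Neg (And ?k (Neg ?k)) \<in> T"
      using m by (intro prime_theory_LIiP[OF T] LIiP_not_contradiction) simp
    ultimately show False using prime_theory_consistent[OF T] by blast
  qed
  then show thesis
    using lindenbaum[OF box_context_wf_fm[OF T m] wf] that by metis
qed

section \<open>The canonical model\<close>

definition canon_le :: "('a, 'b, 'p) fm set \<Rightarrow> ('a, 'b, 'p) fm set \<Rightarrow> bool" where
  "canon_le T U \<longleftrightarrow> prime_theory T \<and> prime_theory U \<and> T \<subseteq> U"

definition canon_R :: "('a, 'b) msg \<Rightarrow> ('a, 'b, 'p) fm set \<Rightarrow> ('a, 'b, 'p) fm set \<Rightarrow> bool" where
  "canon_R m T U \<longleftrightarrow> prime_theory T \<and> prime_theory U \<and> box_context T m \<subseteq> U"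

definition canon_D :: "'a \<Rightarrow> ('a, 'b, 'p) fm set \<Rightarrow> ('a, 'b) msg set" where
  "canon_D a T = {m. kn a m \<in> T}"

definition canon_V :: "('a, 'b, 'p) atom \<Rightarrow> ('a, 'b, 'p) fm set set" where
  "canon_V P = {T. prime_theory T \<and> Atom P \<in> T}"

lemma canon_le_iff: "prime_theory T \<Longrightarrow> canon_le T U \<longleftrightarrow> prime_theory U \<and> T \<subseteq> U"
  by (simp add: canon_le_def)

lemma canon_R_iff:
  "prime_theory T \<Longrightarrow> canon_R m T U \<longleftrightarrow> prime_theory U \<and> box_context T m \<subseteq> U"
  by (simp add: canon_R_def)

lemma cl_canon_D_iff:
  assumes T: "prime_theory T"
  shows "m \<in> cl a (canon_D a T) \<longleftrightarrow> kn a m \<in> T"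
proof
  show "m \<in> cl a (canon_D a T)" if "kn a m \<in> T"
    using that by (simp add: canon_D_def cl.cl_base)
next
  assume "m \<in> cl a (canon_D a T)"
  then show "kn a m \<in> T"
  proof (induction rule: cl.induct)
    case cl_self
    show ?case by (rule prime_theory_LIiP[OF T LIiP.ax_self])
  next
    case (cl_base m)
    then show ?case by (simp add: canon_D_def)
  next
    case (cl_pair m n)
    moreover have "msg_ok Bs m" "msg_ok Bs n"
      using prime_theory_wf_fm[OF T cl_pair.IH(1)] prime_theory_wf_fm[OF T cl_pair.IH(2)] by auto
    ultimately show ?case by (simp add: prime_theory_kn_MPair_iff[OF T])
  next
    case (cl_fst m n)
    moreover have "msg_ok Bs m" "msg_ok Bs n" using prime_theory_wf_fm[OF T cl_fst.IH] by auto
    ultimately show ?case by (simp add: prime_theory_kn_MPair_iff[OF T])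
  next
    case (cl_snd m n)
    moreover have "msg_ok Bs m" "msg_ok Bs n" using prime_theory_wf_fm[OF T cl_snd.IH] by auto
    ultimately show ?case by (simp add: prime_theory_kn_MPair_iff[OF T])
  qed
qed

lemma sat_canon_iff:
  "prime_theory T \<Longrightarrow> wf_fm Bs Ps f \<Longrightarrow> sat canon_le canon_R canon_V T f \<longleftrightarrow> f \<in> T"
proof (induction f arbitrary: T)
  case (Atom P)
  then show ?case by (simp add: canon_V_def)
next
  case (And f g)
  then show ?case by (simp add: prime_theory_And_iff)
next
  case (Or f g)
  then show ?case by (simp add: prime_theory_Or_iff)
next
  case (Neg f)
  then show ?case by (auto simp: canon_le_iff prime_theory_Neg_iff)
next
  case (Imp f g)
  then show ?case by (auto simp: canon_le_iff prime_theory_Imp_iff)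
next
  case (Box m f)
  then show ?case by (auto simp: canon_R_iff prime_theory_Box_iff)
qed

lemma canon_R_Ag_CM: "canon_R (Ag cm) = canon_le"
proof (intro ext iffI)
  fix T U
  assume "canon_R (Ag cm) T U"
  then show "canon_le T U" by (auto simp: canon_R_def canon_le_def box_context_def)
next
  fix T U
  assume "canon_le T U"
  then have T: "prime_theory T" and U: "prime_theory U" and "T \<subseteq> U"
    by (simp_all add: canon_le_def)
  have "kn cm (Ag cm) \<in> U" by (rule prime_theory_LIiP[OF U LIiP.ax_self])
  moreover have "f \<in> U" if "Box (Ag cm) f \<in> T" for f
    using prime_theory_Box_kn[OF T _ prime_theory_LIiP[OF T LIiP.ax_self] that] \<open>T \<subseteq> U\<close> by auto
  ultimately show "canon_R (Ag cm) T U"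
    using T U \<open>T \<subseteq> U\<close> by (auto simp: canon_R_def box_context_def)
qed

lemma LIiP_Imp_if_prime_theories:
  assumes wf: "wf_fm Bs Ps f" "wf_fm Bs Ps g"
    and incl: "\<And>T. prime_theory T \<Longrightarrow> f \<in> T \<Longrightarrow> g \<in> T"
  shows "LIiP cm Bs Ps (Imp f g)"
proof (rule ccontr)
  assume "\<not> LIiP cm Bs Ps (Imp f g)"
  then have "\<not> derives cm Bs Ps {f} g" using LIiP_deduction wf(1) by metis
  moreover have "{f} \<subseteq> {f. wf_fm Bs Ps f}" using wf(1) by simp
  ultimately obtain T where "f \<in> T" "prime_theory T" "g \<notin> T"
    using lindenbaum[OF _ wf(2)] by (metis insert_subset)
  then show False using incl by blast
qed

lemma canon_R_mono:
  assumes m: "msg_ok Bs m" "msg_ok Bs m'"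
    and kn: "\<And>T. prime_theory T \<Longrightarrow> kn cm m \<in> T \<Longrightarrow> kn cm m' \<in> T"
    and "canon_R m T U"
  shows "canon_R m' T U"
proof -
  have T: "prime_theory T" and U: "prime_theory U"
    and TU: "box_context T m \<subseteq> U"
    using \<open>canon_R m T U\<close> by (simp_all add: canon_R_def)
  have imp: "LIiP cm Bs Ps (Imp (kn cm m) (kn cm m'))"
    using m kn by (intro LIiP_Imp_if_prime_theories) auto
  have "Box m f \<in> T" if "Box m' f \<in> T" for f
  proof -
    have "wf_fm Bs Ps f" using prime_theory_wf_fm[OF T that] by simp
    from this that show ?thesis by (rule prime_theory_LIiP_mp[OF T LIiP.mono[OF imp]])
  qed
  moreover have "kn cm m' \<in> U" using TU kn[OF U] by (simp add: box_context_def)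
  ultimately show ?thesis using T U TU by (auto simp: canon_R_def box_context_def)
qed

lemma canon_R_le: "canon_R m T U \<Longrightarrow> canon_le T U"
  by (auto simp: canon_R_def canon_le_def box_context_def)

lemma canon_le_R_trans: "canon_le S T \<Longrightarrow> canon_R m T U \<Longrightarrow> canon_R m S U"
  by (auto simp: canon_R_def canon_le_def box_context_def)

lemma canon_R_known: "canon_R m T U \<Longrightarrow> kn cm m \<in> U"
  by (simp add: canon_R_def box_context_def)

lemma canon_R_refl:
  "prime_theory T \<Longrightarrow> msg_ok Bs m \<Longrightarrow> kn cm m \<in> T \<Longrightarrow> canon_R m T T"
  using prime_theory_Box_kn by (auto simp: canon_R_def box_context_def)

lemma canon_R_serial: "prime_theory T \<Longrightarrow> msg_ok Bs m \<Longrightarrow> \<exists>U. canon_R m T U"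
  using prime_theory_Box_successor unfolding canon_R_def by metis

lemma is_model_canonical:
  assumes "prime_theory T0"
  shows "is_model cm Bs Ps {T. prime_theory T} canon_le canon_R canon_D canon_V"
proof -
  let ?S = "{T. prime_theory T}"
  have R: "\<forall>m. msg_ok Bs m \<longrightarrow>
      (\<forall>s t. canon_R m s t \<longrightarrow> m \<in> cl cm (canon_D cm t)) \<and>
      (\<forall>s\<in>?S. m \<in> cl cm (canon_D cm s) \<longrightarrow> canon_R m s s) \<and>
      (\<forall>s\<in>?S. \<exists>t. canon_R m s t) \<and>
      (\<forall>s t. canon_R m s t \<longrightarrow> canon_le s t) \<and>
      (\<forall>s t u. canon_le s t \<longrightarrow> canon_R m t u \<longrightarrow> canon_R m s u)"
  proof (rule allI, rule impI, intro conjI)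
    fix m :: "('a, 'b) msg"
    assume m: "msg_ok Bs m"
    show "\<forall>s t. canon_R m s t \<longrightarrow> m \<in> cl cm (canon_D cm t)"
      using canon_R_known cl_canon_D_iff by (auto simp: canon_R_def)
    show "\<forall>s\<in>?S. m \<in> cl cm (canon_D cm s) \<longrightarrow> canon_R m s s"
      using canon_R_refl[OF _ m] cl_canon_D_iff by blast
    show "\<forall>s\<in>?S. \<exists>t. canon_R m s t"
      using canon_R_serial[OF _ m] by blast
    show "\<forall>s t. canon_R m s t \<longrightarrow> canon_le s t"
      using canon_R_le by blast
    show "\<forall>s t u. canon_le s t \<longrightarrow> canon_R m t u \<longrightarrow> canon_R m s u"
      using canon_le_R_trans by blast
  qed
  have R_mono: "\<forall>m m'. msg_ok Bs m \<longrightarrow> msg_ok Bs m' \<longrightarrow>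
      (\<forall>s\<in>?S. m \<in> cl cm (canon_D cm s) \<longrightarrow> m' \<in> cl cm (canon_D cm s)) \<longrightarrow>
      (\<forall>s t. canon_R m s t \<longrightarrow> canon_R m' s t)"
    using cl_canon_D_iff canon_R_mono by simp
  have D: "\<forall>a. \<forall>s\<in>?S. \<forall>m\<in>canon_D a s. msg_ok Bs m"
    using prime_theory_wf_fm by (fastforce simp: canon_D_def)
  have V_kn: "\<forall>a m. msg_ok Bs m \<longrightarrow> canon_V (K a m) = {s\<in>?S. m \<in> cl a (canon_D a s)}"
    using cl_canon_D_iff by (auto simp: canon_V_def)
  have V_mono: "\<forall>P s t. atom_ok Bs Ps P \<longrightarrow> s \<in> canon_V P \<longrightarrow> canon_le s t \<longrightarrow> t \<in> canon_V P"
    by (auto simp: canon_V_def canon_le_def)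
  have "?S \<noteq> {}" using assms by blast
  moreover have "\<forall>s t. canon_le s t \<longrightarrow> s \<in> ?S \<and> t \<in> ?S"
    and "\<forall>s\<in>?S. canon_le s s"
    and "\<forall>s t u. canon_le s t \<longrightarrow> canon_le t u \<longrightarrow> canon_le s u"
    and "\<forall>s t. canon_le s t \<longrightarrow> canon_le t s \<longrightarrow> s = t"
    by (auto simp: canon_le_def)
  moreover have "\<forall>P. atom_ok Bs Ps P \<longrightarrow> canon_V P \<subseteq> ?S"
    by (auto simp: canon_V_def)
  ultimately show ?thesis
    unfolding is_model_def using D V_kn V_mono R canon_R_Ag_CM R_mono
    by (intro conjI) assumption+
qed

lemma LIiP_if_valid:
  assumes wf: "wf_fm Bs Ps f" and valid: "valid cm Bs Ps TYPE(('a, 'b, 'p) fm set) f"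
  shows "LIiP cm Bs Ps f"
proof (rule ccontr)
  assume "\<not> LIiP cm Bs Ps f"
  then have "\<not> derives cm Bs Ps {} f" using derives_empty_imp_LIiP by blast
  then obtain T where T: "prime_theory T" "f \<notin> T"
    using lindenbaum[OF _ wf] by blast
  then have "sat canon_le canon_R canon_V T f"
    using valid is_model_canonical[OF T(1)] unfolding valid_def by blast
  with T show False using sat_canon_iff[OF T(1) wf] by blast
qed

end

text \<open>Lindenbaum's lemma is proved with Zorn's lemma.\<close>

theorem theorem3:
  fixes cm :: "'a :: finite" and Bs :: "'b set" and Ps :: "'p set"
    and f :: "('a, 'b, 'p) fm"
  assumes "countable Ps"
    and "wf_fm Bs Ps f"
  shows "(LIiP cm Bs Ps f \<longrightarrow> valid cm Bs Ps TYPE('s) f)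
       \<and> (valid cm Bs Ps TYPE(('a, 'b, 'p) fm set) f \<longrightarrow> LIiP cm Bs Ps f)"
proof (intro conjI impI)
  show "valid cm Bs Ps TYPE('s) f" if "LIiP cm Bs Ps f"
    using that by (rule valid_if_LIiP)
  show "LIiP cm Bs Ps f" if "valid cm Bs Ps TYPE(('a, 'b, 'p) fm set) f"
    using assms(2) that by (rule LIiP_if_valid)
qed

end
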